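(* Let $A$ be a finite nonempty alphabet and $\zeta:A^\omega\to A^\omega$ a bijective $\omega$-sequential function. Then for every $n\ge0$ the map $\epsilon:A^n\to A^n$, $u\mapsto\zeta(ux)[0,n]$ (independent of $x\in A^\omega$), is a bijection.
   Context: For an infinite word $z$, $z[0,n]$ denotes its prefix of length $n$. A map $\zeta:A^\omega\to A^\omega$ is $\omega$-sequential if whenever a finite word $u$ is a common prefix of $x$ and $y$, then $\zeta(x)[0,|u|]=\zeta(y)[0,|u|]$. *)

theory Defs
  imports Main "HOL-Library.Omega_Words_Fun"
begin

definition omega_sequential :: "('a word \<Rightarrow> 'a word) \<Rightarrow> bool" where
  "omega_sequential \<zeta> \<longleftrightarrow>
     (\<forall>(u::'a list) x y. prefix (length u) x = u \<and> prefix (length u) y = u \<longrightarrow>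
        prefix (length u) (\<zeta> x) = prefix (length u) (\<zeta> y))"

end

theory Submission
  imports Defs
begin

text \<open>Every word v of length n is reached: if \<zeta> w = v x, then by sequentiality the
  length-n prefix of w is sent to v. A surjective self-map of the finite set of
  words of length n is a bijection.\<close>

lemma omega_sequential_prefix_conc:
  assumes "omega_sequential \<zeta>" and "length u = n"
  shows "prefix n (\<zeta> (u \<frown> x)) = prefix n (\<zeta> (u \<frown> y))"
  using assms unfolding omega_sequential_def by (metis prefix_conc_length)

lemma omega_sequential_prefix_image:
  assumes "surj \<zeta>" and "omega_sequential \<zeta>"
  shows "(\<lambda>u. prefix n (\<zeta> (u \<frown> x))) ` {u. length u = n} = {u. length u = n}"
proof
  show "(\<lambda>u. prefix n (\<zeta> (u \<frown> x))) ` {u. length u = n} \<subseteq> {u. length u = n}"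
    by auto
next
  show "{u. length u = n} \<subseteq> (\<lambda>u. prefix n (\<zeta> (u \<frown> x))) ` {u. length u = n}"
  proof
    fix v :: "'a list"
    assume v: "v \<in> {u. length u = n}"
    obtain w where w: "\<zeta> w = v \<frown> x"
      using \<open>surj \<zeta>\<close> by (metis surjD)
    have "prefix n (\<zeta> (prefix n w \<frown> x)) = prefix n (\<zeta> (prefix n w \<frown> suffix n w))"
      by (rule omega_sequential_prefix_conc[OF \<open>omega_sequential \<zeta>\<close>]) simp
    also have "\<dots> = v"
      using w v by (simp flip: prefix_suffix)
    finally show "v \<in> (\<lambda>u. prefix n (\<zeta> (u \<frown> x))) ` {u. length u = n}"
      by force
  qed
qed

theorem lemma4p5:
  fixes \<zeta> :: "('a::finite) word \<Rightarrow> 'a word"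
  assumes "bij \<zeta>" and "omega_sequential \<zeta>"
  shows "(\<forall>u x y. length u = n \<longrightarrow> prefix n (\<zeta> (u \<frown> x)) = prefix n (\<zeta> (u \<frown> y)))
       \<and> (\<forall>x. bij_betw (\<lambda>u. prefix n (\<zeta> (u \<frown> x))) {u. length u = n} {u. length u = n})"
proof (intro conjI allI impI)
  show "prefix n (\<zeta> (u \<frown> x)) = prefix n (\<zeta> (u \<frown> y))" if "length u = n" for u x y
    using omega_sequential_prefix_conc[OF assms(2) that] .
next
  fix x
  have finite_words: "finite {u::'a list. length u = n}"
    using finite_lists_length_eq[OF finite_UNIV] by simp
  have image: "(\<lambda>u. prefix n (\<zeta> (u \<frown> x))) ` {u. length u = n} = {u. length u = n}"
    using omega_sequential_prefix_image[OF bij_is_surj[OF assms(1)] assms(2)] .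
  then have "inj_on (\<lambda>u. prefix n (\<zeta> (u \<frown> x))) {u. length u = n}"
    using finite_words by (intro finite_surj_inj) auto
  with image show "bij_betw (\<lambda>u. prefix n (\<zeta> (u \<frown> x))) {u. length u = n} {u. length u = n}"
    by (simp add: bij_betw_def)
qed

end
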